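(* Let $v\geq 8$ be even. If a symmetric configuration $v_3$ has no blocking set, then its Levi graph is not Hamiltonian.
   Context: A symmetric configuration $v_3$ consists of a set of $v$ points and a collection of $v$ blocks, each block being a 3-element subset of the points, such that every point lies in exactly 3 blocks and any two distinct points lie in at most one common block. Its Levi graph is the bipartite graph whose vertices are the points and blocks, a point being adjacent to each block containing it. A blocking set is a subset $Q$ of the points such that every block contains at least one point of $Q$ and at least one point not in $Q$. *)

theory Defs
  imports Main
begin

definition sym_config_v3 :: "nat \<Rightarrow> 'a set \<Rightarrow> 'a set set \<Rightarrow> bool" where
  "sym_config_v3 v P B \<longleftrightarrow>
     finite P \<and> card P = v \<and> card B = v \<and>
     (\<forall>b\<in>B. b \<subseteq> P \<and> card b = 3) \<and>
     (\<forall>p\<in>P. card {b\<in>B. p \<in> b} = 3) \<and>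
     (\<forall>p\<in>P. \<forall>q\<in>P. p \<noteq> q \<longrightarrow> card {b\<in>B. p \<in> b \<and> q \<in> b} \<le> 1)"

definition blocking_set :: "'a set \<Rightarrow> 'a set set \<Rightarrow> 'a set \<Rightarrow> bool" where
  "blocking_set P B Q \<longleftrightarrow> Q \<subseteq> P \<and>
     (\<forall>b\<in>B. (\<exists>x\<in>b. x \<in> Q) \<and> (\<exists>x\<in>b. x \<notin> Q))"

definition levi_vertices :: "'a set \<Rightarrow> 'a set set \<Rightarrow> ('a + 'a set) set" where
  "levi_vertices P B = Inl ` P \<union> Inr ` B"

fun levi_adj :: "'a set \<Rightarrow> 'a set set \<Rightarrow> ('a + 'a set) \<Rightarrow> ('a + 'a set) \<Rightarrow> bool" where
  "levi_adj P B (Inl p) (Inr b) = (p \<in> P \<and> b \<in> B \<and> p \<in> b)"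
| "levi_adj P B (Inr b) (Inl p) = (p \<in> P \<and> b \<in> B \<and> p \<in> b)"
| "levi_adj P B _ _ = False"

definition hamiltonian :: "'v set \<Rightarrow> ('v \<Rightarrow> 'v \<Rightarrow> bool) \<Rightarrow> bool" where
  "hamiltonian V adj \<longleftrightarrow> (\<exists>c. distinct c \<and> set c = V \<and> length c \<ge> 3 \<and>
     (\<forall>i < length c. adj (c ! i) (c ! ((i + 1) mod length c))))"

end

theory Submission
  imports Defs
begin

text \<open>Walking once around a Hamiltonian cycle of the Levi graph, points and blocks alternate,
  so the two points adjacent to a block sit two positions apart. Colour a point by whether its
  position is \<open>0\<close> or \<open>1\<close> modulo \<open>4\<close>: when the cycle length \<open>2v\<close> is divisible by \<open>4\<close>, which
  happens for even \<open>v\<close>, shifting a position by two (cyclically) always flips the colour, so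
  every block receives both colours and the coloured points form a blocking set.\<close>

lemma mod4_shift_two_flips:
  fixes i n :: nat
  assumes "4 dvd n"
  shows "(i + 2) mod n mod 4 < 2 \<longleftrightarrow> \<not> i mod 4 < 2"
  using assms by (simp add: mod_mod_cancel) presburger

lemma card_levi_vertices:
  assumes "finite P" "finite B"
  shows "card (levi_vertices P B) = card P + card B"
  unfolding levi_vertices_def
  using assms by (subst card_Un_disjoint) (auto simp: card_image)

lemma hamiltonian_cycle_block_neighbours:
  assumes adj: "\<forall>i < length c. levi_adj P B (c ! i) (c ! ((i + 1) mod length c))"
    and "length c \<ge> 3" and "Inr b \<in> set c"
  obtains k p q where "k < length c" "c ! k = Inl p" "p \<in> P" "p \<in> b"
    "c ! ((k + 2) mod length c) = Inl q" "q \<in> P" "q \<in> b"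
proof -
  define n where "n = length c"
  obtain j where j: "j < n" "c ! j = Inr b"
    using \<open>Inr b \<in> set c\<close> by (metis in_set_conv_nth n_def)
  define k where "k = (j + n - 1) mod n"
  have "k < n" unfolding k_def using j(1) by simp
  have succ_k: "(k + 1) mod n = j"
    unfolding k_def using j by (simp add: mod_add_left_eq[symmetric] mod_if)
  have succ_j: "(k + 2) mod n = (j + 1) mod n"
    using succ_k by (metis add.commute add.left_commute mod_add_right_eq one_add_one)
  have "levi_adj P B (c ! k) (Inr b)"
    using adj \<open>k < n\<close> succ_k j n_def by metis
  then obtain p where p: "c ! k = Inl p" "p \<in> P" "p \<in> b"
    by (cases "c ! k") auto
  have "levi_adj P B (Inr b) (c ! ((k + 2) mod n))"
    using adj j succ_j n_def by metis
  then obtain q where q: "c ! ((k + 2) mod n) = Inl q" "q \<in> P" "q \<in> b"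
    by (cases "c ! ((k + 2) mod n)") auto
  show thesis using that \<open>k < n\<close> p q n_def by blast
qed

lemma blocking_set_if_hamiltonian_levi:
  assumes "hamiltonian (levi_vertices P B) (levi_adj P B)"
    and "4 dvd card (levi_vertices P B)"
  shows "\<exists>Q. blocking_set P B Q"
proof -
  obtain c where distinct: "distinct c" and vertices: "set c = levi_vertices P B"
    and "length c \<ge> 3"
    and adj: "\<forall>i < length c. levi_adj P B (c ! i) (c ! ((i + 1) mod length c))"
    using assms(1) unfolding hamiltonian_def by blast
  define n where "n = length c"
  have "4 dvd n"
    using assms(2) distinct_card[OF distinct] vertices n_def by simp
  define Q where "Q = {p \<in> P. \<forall>i<n. c ! i = Inl p \<longrightarrow> i mod 4 < 2}"
  have Q_iff: "p \<in> Q \<longleftrightarrow> i mod 4 < 2" if "i < n" "c ! i = Inl p" "p \<in> P" for i p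
  proof -
    have "\<forall>k<n. c ! k = Inl p \<longrightarrow> k = i"
      using that distinct unfolding n_def by (metis nth_eq_iff_index_eq)
    then show ?thesis using that unfolding Q_def by blast
  qed
  have "blocking_set P B Q"
    unfolding blocking_set_def
  proof (intro conjI ballI)
    show "Q \<subseteq> P" unfolding Q_def by auto
  next
    fix b assume "b \<in> B"
    then have "Inr b \<in> set c" using vertices unfolding levi_vertices_def by auto
    with adj \<open>length c \<ge> 3\<close> obtain k p q where k: "k < n"
      and p: "c ! k = Inl p" "p \<in> P" "p \<in> b"
      and q: "c ! ((k + 2) mod n) = Inl q" "q \<in> P" "q \<in> b"
      unfolding n_def by (rule hamiltonian_cycle_block_neighbours)
    have "(k + 2) mod n < n" using k by simp
    then have "p \<in> Q \<longleftrightarrow> q \<notin> Q"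
      using Q_iff[OF k p(1,2)] Q_iff[OF _ q(1,2)] mod4_shift_two_flips[OF \<open>4 dvd n\<close>]
      by simp
    then show "\<exists>x\<in>b. x \<in> Q" "\<exists>x\<in>b. x \<notin> Q" using p q by blast+
  qed
  then show ?thesis by blast
qed

theorem mainTheorem11:
  fixes v :: nat and P :: "'a set" and B :: "'a set set"
  assumes "v \<ge> 8" and "even v"
    and "sym_config_v3 v P B"
    and "\<not> (\<exists>Q. blocking_set P B Q)"
  shows "\<not> hamiltonian (levi_vertices P B) (levi_adj P B)"
proof
  assume hamiltonian: "hamiltonian (levi_vertices P B) (levi_adj P B)"
  have "finite P" and "card P = v" and "card B = v"
    using assms(3) unfolding sym_config_v3_def by auto
  \<comment> \<open>The bound \<open>v \<ge> 8\<close> is only needed here: \<open>card B = v\<close> alone would allow an infinite \<open>B\<close>.\<close>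
  moreover have "finite B" using \<open>card B = v\<close> \<open>v \<ge> 8\<close> card.infinite by fastforce
  ultimately have "card (levi_vertices P B) = 2 * v" by (simp add: card_levi_vertices)
  then have "4 dvd card (levi_vertices P B)" using \<open>even v\<close> by auto
  then show False
    using blocking_set_if_hamiltonian_levi[OF hamiltonian] assms(4) by blast
qed

end
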